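(* Let $\mathcal{X}$ be a finite set of actions, $\mathcal{Y}$ a finite set of responses, $\mathcal{H}\subseteq\mathcal{Y}^{\mathcal{X}}$, $\mathrm{cost}:\mathcal{X}\times\mathcal{Y}\to\mathbb{R}_+$. Let $f:2^{\mathcal{X}\times\mathcal{Y}}\to\mathbb{R}_+$, $Q>0$, $\eta>0$ be such that $f$ is monotone non-decreasing and submodular, $f(\emptyset)=0$, for every $S$, $f(S)\ge Q-\eta$ implies $f(S)\ge Q$, and $f$ is consistency-aware for $Q$. Let $\mathcal{A}$ be an interactive algorithm that obtains $f(S)\ge Q$ at termination (i.e. $f(S^h[\mathcal{A}])\ge Q$ for all $h\in\mathcal{H}$). Let $\gamma=r_{\mathrm{cost}}$ if $\mathcal{A}$ is bifurcating, and $\gamma=R_{\mathrm{cost}}$ otherwise. Then there exists $x\in\mathcal{X}$ such that $$u^f(x,\emptyset)\ge \frac{Q}{\gamma\cdot\mathrm{cost}(\mathcal{A})}.$$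
   Context: The true state is an unknown $h^*\in\mathcal{H}$. An interactive algorithm $\mathcal{A}$, given the set $S\subseteq\mathcal{X}\times\mathcal{Y}$ of pairs observed so far, outputs either an action $\mathcal{A}(S)\in\mathcal{X}$ (yielding the pair $(x,h^*(x))$, which is added to $S$) or terminates. $S^h_t[\mathcal{A}]$ / $S^h[\mathcal{A}]$ denote the pairs collected in the first $t$ iterations / until termination when $h^*=h$. $\mathrm{cost}(S)=\sum_{(x,y)\in S}\mathrm{cost}(x,y)$, $\mathrm{cost}(\mathcal{A})=\max_{h\in\mathcal{H}}\mathrm{cost}(S^h[\mathcal{A}])$. Version space $V(S)=\{h\in\mathcal{H}\mid\forall(x,y)\in S,\ y=h(x)\}$; $\mathcal{Y}(x,S)=\{h(x)\mid h\in V(S)\}$. $\mathcal{A}$ is bifurcating if for all $t$ and $h\in\mathcal{H}$ (at which $\mathcal{A}$ selects an action), $|\mathcal{Y}(\mathcal{A}(S^h_t[\mathcal{A}]),S^h_t[\mathcal{A}])|\ge 2$. $f$ is consistency-aware for $Q$ if $f(S)\ge Q$ for all $S$ with $V(S)=\emptyset$. $\delta_g(z\mid A)=g(A\cup\{z\})-g(A)$; $u^f(x,S)=\min_{h\in V(S)}\frac{\delta_{\min(f,Q)}((x,h(x))\mid S)}{\mathrm{cost}(x,h(x))}$. Cost ratio: $R_{\mathrm{cost}}=\max_{x\in\mathcal{X}}\frac{\max_{y}\mathrm{cost}(x,y)}{\min_y\mathrm{cost}(x,y)}$. Second-smallest cost ratio: $\phi(x)$ is the second-smallest value in the multiset $\{\mathrm{cost}(x,y)\mid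 y\in\mathcal{Y}\}$ and $r_{\mathrm{cost}}=\max_{x,y}\frac{\mathrm{cost}(x,y)}{\phi(x)}$. *)

theory Defs
  imports Complex_Main "HOL-Library.Multiset"
begin

type_synonym ('x, 'y) alg = "('x \<times> 'y) set \<Rightarrow> 'x option"
  (* Some x = select action x;  None = terminate *)

definition costS :: "('x \<Rightarrow> 'y \<Rightarrow> real) \<Rightarrow> ('x \<times> 'y) set \<Rightarrow> real" where
  "costS cost S = (\<Sum>(x,y)\<in>S. cost x y)"

definition vs :: "('x \<Rightarrow> 'y) set \<Rightarrow> ('x \<times> 'y) set \<Rightarrow> ('x \<Rightarrow> 'y) set" where
  "vs H S = {h \<in> H. \<forall>(x,y)\<in>S. y = h x}"

definition resp :: "('x \<Rightarrow> 'y) set \<Rightarrow> 'x \<Rightarrow> ('x \<times> 'y) set \<Rightarrow> 'y set" where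
  "resp H x S = {h x | h. h \<in> vs H S}"

primrec run :: "('x, 'y) alg \<Rightarrow> ('x \<Rightarrow> 'y) \<Rightarrow> nat \<Rightarrow> ('x \<times> 'y) set" where
  "run A h 0 = {}"
| "run A h (Suc t) = (case A (run A h t) of None \<Rightarrow> run A h t
                        | Some x \<Rightarrow> insert (x, h x) (run A h t))"

definition terminates :: "('x, 'y) alg \<Rightarrow> ('x \<Rightarrow> 'y) \<Rightarrow> bool" where
  "terminates A h = (\<exists>t. A (run A h t) = None)"

definition final :: "('x, 'y) alg \<Rightarrow> ('x \<Rightarrow> 'y) \<Rightarrow> ('x \<times> 'y) set" where
  "final A h = run A h (LEAST t. A (run A h t) = None)"

definition costA :: "('x \<Rightarrow> 'y \<Rightarrow> real) \<Rightarrow> ('x \<Rightarrow> 'y) set \<Rightarrow> ('x, 'y) alg \<Rightarrow> real" where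
  "costA cost H A = Max ((\<lambda>h. costS cost (final A h)) ` H)"

definition bifurcating :: "('x \<Rightarrow> 'y) set \<Rightarrow> ('x, 'y) alg \<Rightarrow> bool" where
  "bifurcating H A = (\<forall>t. \<forall>h\<in>H. \<forall>x. A (run A h t) = Some x \<longrightarrow>
        card (resp H x (run A h t)) \<ge> 2)"

definition consistency_aware :: "('x \<Rightarrow> 'y) set \<Rightarrow> (('x \<times> 'y) set \<Rightarrow> real) \<Rightarrow> real \<Rightarrow> bool" where
  "consistency_aware H f Q = (\<forall>S. vs H S = {} \<longrightarrow> f S \<ge> Q)"

definition monotone_fn :: "(('x \<times> 'y) set \<Rightarrow> real) \<Rightarrow> bool" where
  "monotone_fn f = (\<forall>A B. A \<subseteq> B \<longrightarrow> f A \<le> f B)"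

definition submodular :: "(('x \<times> 'y) set \<Rightarrow> real) \<Rightarrow> bool" where
  "submodular f = (\<forall>A B z. A \<subseteq> B \<longrightarrow> z \<notin> B \<longrightarrow>
        f (insert z A) - f A \<ge> f (insert z B) - f B)"

definition delta :: "(('x \<times> 'y) set \<Rightarrow> real) \<Rightarrow> ('x \<times> 'y) \<Rightarrow> ('x \<times> 'y) set \<Rightarrow> real" where
  "delta g z A = g (insert z A) - g A"

definition ufun :: "('x \<Rightarrow> 'y) set \<Rightarrow> ('x \<Rightarrow> 'y \<Rightarrow> real) \<Rightarrow> (('x \<times> 'y) set \<Rightarrow> real) \<Rightarrow> real
                    \<Rightarrow> 'x \<Rightarrow> ('x \<times> 'y) set \<Rightarrow> real" where
  "ufun H cost f Q x S = Min ((\<lambda>h. delta (\<lambda>T. min (f T) Q) (x, h x) S / cost x (h x)) ` vs H S)"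

definition Rcost :: "('x::finite \<Rightarrow> 'y::finite \<Rightarrow> real) \<Rightarrow> real" where
  "Rcost cost = Max ((\<lambda>x. Max (range (cost x)) / Min (range (cost x))) ` UNIV)"

definition phi :: "('x \<Rightarrow> 'y::finite \<Rightarrow> real) \<Rightarrow> 'x \<Rightarrow> real" where
  "phi cost x = sorted_list_of_multiset (image_mset (cost x) (mset_set UNIV)) ! 1"

definition rcost :: "('x::finite \<Rightarrow> 'y::finite \<Rightarrow> real) \<Rightarrow> real" where
  "rcost cost = Max ((\<lambda>(x,y). cost x y / phi cost x) ` UNIV)"

end

theory Submission
  imports Defs
begin

text \<open>
  Answer every action x with the response of some h \<in> H attaining the minimum in u(x, \<emptyset>); call
  this adversary g (it need not lie in H). Run the algorithm against g until it stops or until the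
  next answer of g leaves no consistent hypothesis. In the first case a hypothesis consistent with
  the run makes the algorithm stop at the same set, which therefore reaches Q at cost at most
  cost(A). In the second case the set with the last answer added reaches Q by consistency
  awareness, and its cost is at most \<gamma> cost(A): the last answer costs at most \<gamma> times the answer
  of a still consistent hypothesis, on which the algorithm pays for the whole run plus that answer.
  So a set T of g-answers with f(T) \<ge> Q and cost(T) \<le> \<gamma> cost(A) exists, and by submodularity
  min(f, Q) is subadditive over T, so some element of T has gain per cost at least Q / (\<gamma> cost(A)).
\<close>

section \<open>Runs of an interactive algorithm\<close>

lemma run_mono: "s \<le> t \<Longrightarrow> run A h s \<subseteq> run A h t"
  by (induction t) (auto simp: le_Suc_eq split: option.splits)

lemma run_consistent: "(a, b) \<in> run A g t \<Longrightarrow> b = g a"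
  by (induction t) (auto split: option.splits)

lemma vs_empty [simp]: "vs H {} = H"
  unfolding vs_def by simp

lemma in_vs_run: "h \<in> H \<Longrightarrow> h \<in> vs H (run A h t)"
  unfolding vs_def by (auto dest: run_consistent)

lemma run_agree:
  assumes "h \<in> vs H (run A g t)" "s \<le> t"
  shows "run A h s = run A g s"
  using assms(2)
proof (induction s)
  case (Suc s)
  show ?case
  proof (cases "A (run A g s)")
    case (Some x)
    have "(x, g x) \<in> run A g (Suc s)" using Some by simp
    also have "\<dots> \<subseteq> run A g t" using Suc.prems run_mono by blast
    finally have "h x = g x" using assms(1) unfolding vs_def by auto
    with Suc Some show ?thesis by simp
  qed (use Suc in simp)
qed simp

lemma run_agree_active:
  assumes "h \<in> vs H (run A g t)" "\<forall>s<t. A (run A g s) \<noteq> None"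
  shows "run A h t = run A g t" "\<forall>s<t. A (run A h s) \<noteq> None"
  using assms run_agree[OF assms(1)] by auto

lemma final_eq:
  assumes "A (run A h t) = None" "\<forall>s<t. A (run A h s) \<noteq> None"
  shows "final A h = run A h t"
proof -
  have "(LEAST t. A (run A h t) = None) = t"
    by (rule Least_equality) (use assms leI in blast)+
  then show ?thesis unfolding final_def by simp
qed

lemma final_consistent_run:
  assumes "h \<in> vs H (run A g t)" "\<forall>s<t. A (run A g s) \<noteq> None" "A (run A g t) = None"
  shows "final A h = run A g t"
  using final_eq run_agree_active[OF assms(1,2)] assms(3) by metis

lemma run_subset_final:
  assumes "terminates A h" "\<forall>s<t. A (run A h s) \<noteq> None"
  shows "run A h t \<subseteq> final A h"
proof -
  define L where "L = (LEAST t. A (run A h t) = None)"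
  have "A (run A h L) = None"
    unfolding L_def using assms(1) unfolding terminates_def by (rule LeastI_ex)
  then have "t \<le> L" using assms(2) by (meson not_less)
  then show ?thesis unfolding final_def L_def[symmetric] by (rule run_mono)
qed

lemma uniform_termination_bound:
  assumes "finite H" "\<forall>h\<in>H. terminates A h"
  obtains M where "\<forall>h\<in>H. \<exists>t\<le>M. A (run A h t) = None"
proof
  define L where "L h = (LEAST t. A (run A h t) = None)" for h
  show "\<forall>h\<in>H. \<exists>t\<le>Max (L ` H). A (run A h t) = None"
  proof
    fix h assume "h \<in> H"
    then have "A (run A h (L h)) = None" "L h \<le> Max (L ` H)"
      using assms LeastI_ex[of "\<lambda>t. A (run A h t) = None"]
      by (auto simp: L_def terminates_def)
    then show "\<exists>t\<le>Max (L ` H). A (run A h t) = None" by blast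
  qed
qed

lemma adversary_run_stops:
  assumes "H \<noteq> {}" "finite H" "\<forall>h\<in>H. terminates A h"
  obtains t where "vs H (run A g t) \<noteq> {}" "\<forall>s<t. A (run A g s) \<noteq> None"
    "A (run A g t) = None \<or>
       (\<exists>x. A (run A g t) = Some x \<and> vs H (insert (x, g x) (run A g t)) = {})"
proof -
  define P where "P t \<longleftrightarrow> A (run A g t) = None \<or>
      (\<exists>x. A (run A g t) = Some x \<and> vs H (insert (x, g x) (run A g t)) = {})" for t
  have vs_before: "vs H (run A g t) \<noteq> {}" if "\<forall>s<t. \<not> P s" for t
  proof (cases t)
    case (Suc s)
    then have "\<not> P s" using that by simp
    then obtain x where "A (run A g s) = Some x" "vs H (insert (x, g x) (run A g s)) \<noteq> {}"
      unfolding P_def by auto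
    with Suc show ?thesis by simp
  qed (use assms(1) in simp)
  have "\<exists>t. P t"
  proof (rule ccontr)
    assume none: "\<nexists>t. P t"
    obtain M where M: "\<forall>h\<in>H. \<exists>t\<le>M. A (run A h t) = None"
      using uniform_termination_bound assms(2,3) by blast
    have "vs H (run A g M) \<noteq> {}" using none by (intro vs_before) blast
    then obtain h where h: "h \<in> vs H (run A g M)" by blast
    then obtain t where "t \<le> M" "A (run A h t) = None" using M unfolding vs_def by blast
    with run_agree[OF h] have "P t" unfolding P_def by simp
    with none show False by blast
  qed
  define t where "t = (LEAST t. P t)"
  have "P t" unfolding t_def using \<open>\<exists>t. P t\<close> by (rule LeastI_ex)
  moreover have "\<forall>s<t. \<not> P s" unfolding t_def using not_less_Least by blast
  then have "vs H (run A g t) \<noteq> {}" "\<forall>s<t. A (run A g s) \<noteq> None"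
    using vs_before unfolding P_def by auto
  ultimately show thesis using that unfolding P_def by blast
qed

section \<open>Costs\<close>

lemma costS_nonneg:
  assumes "\<And>x y. cost x y > 0"
  shows "costS cost S \<ge> 0"
  unfolding costS_def by (rule sum_nonneg) (use assms in \<open>auto intro: less_imp_le\<close>)

lemma costS_mono:
  assumes "S \<subseteq> B" "finite B" "\<And>x y. cost x y > 0"
  shows "costS cost S \<le> costS cost B"
  unfolding costS_def by (rule sum_mono2) (use assms in \<open>auto intro: less_imp_le\<close>)

lemma costS_insert:
  assumes "finite S" "(x, y) \<notin> S"
  shows "costS cost (insert (x, y) S) = cost x y + costS cost S"
  unfolding costS_def using assms by simp

lemma costS_final_le_costA:
  fixes H :: "('x::finite \<Rightarrow> 'y::finite) set"
  shows "h \<in> H \<Longrightarrow> costS cost (final A h) \<le> costA cost H A"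
  unfolding costA_def by (intro Max_ge) auto

lemma costS_run_le_costA:
  fixes H :: "('x::finite \<Rightarrow> 'y::finite) set"
  assumes "h \<in> H" "terminates A h" "\<forall>s<t. A (run A h s) \<noteq> None" "\<And>x y. cost x y > 0"
  shows "costS cost (run A h t) \<le> costA cost H A"
proof -
  have "costS cost (run A h t) \<le> costS cost (final A h)"
    by (rule costS_mono[OF run_subset_final[OF assms(2,3)] _ assms(4)]) simp
  also have "\<dots> \<le> costA cost H A" using assms(1) by (rule costS_final_le_costA)
  finally show ?thesis .
qed

lemma costS_consistent_query_le_costA:
  fixes H :: "('x::finite \<Rightarrow> 'y::finite) set"
  assumes "h \<in> vs H (run A g t)" "\<forall>s<t. A (run A g s) \<noteq> None" "A (run A g t) = Some x"
    "terminates A h" "\<And>x y. cost x y > 0"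
  shows "costS cost (insert (x, h x) (run A g t)) \<le> costA cost H A"
proof -
  note h_run = run_agree_active[OF assms(1,2)]
  have "h \<in> H" using assms(1) unfolding vs_def by simp
  have "insert (x, h x) (run A g t) = run A h (Suc t)" using h_run(1) assms(3) by simp
  also have "costS cost \<dots> \<le> costA cost H A"
    using h_run assms(3)
    by (intro costS_run_le_costA[where cost = cost, OF \<open>h \<in> H\<close> assms(4) _ assms(5)])
      (auto simp: less_Suc_eq)
  finally show ?thesis .
qed

lemma costS_insert_le_scaled:
  assumes "finite S" "(x, y) \<notin> S" "(x, y') \<notin> S" "cost x y \<le> \<gamma> * cost x y'" "\<gamma> \<ge> 1"
    "\<And>x y. cost x y > 0"
  shows "costS cost (insert (x, y) S) \<le> \<gamma> * costS cost (insert (x, y') S)"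
proof -
  have "costS cost S \<le> \<gamma> * costS cost S"
    using assms(5) costS_nonneg[of cost S, OF assms(6)] by (simp add: mult_le_cancel_right1)
  then show ?thesis
    using assms(1-4) by (simp add: costS_insert distrib_left)
qed

lemma cost_ratio_bound_ge_one:
  fixes cost :: "'x \<Rightarrow> 'y::finite \<Rightarrow> real"
  assumes "\<And>y. \<exists>y'. cost x y \<le> \<gamma> * cost x y'" "\<And>x y. cost x y > 0"
  shows "\<gamma> \<ge> 1"
proof (rule ccontr)
  assume "\<not> \<gamma> \<ge> 1"
  have "Max (range (cost x)) \<in> range (cost x)" by (rule Max_in) auto
  then obtain y where y: "cost x y = Max (range (cost x))" by (metis rangeE)
  obtain y' where "cost x y \<le> \<gamma> * cost x y'" using assms(1) by blast
  also have "\<dots> < cost x y'" using \<open>\<not> \<gamma> \<ge> 1\<close> assms(2)[of x y'] by simp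
  also have "\<dots> \<le> cost x y" unfolding y by simp
  finally show False by simp
qed

lemma cost_le_Rcost_mul:
  assumes "\<And>x y. cost x y > 0"
  shows "cost x y \<le> Rcost cost * cost x y'"
proof -
  define mx mn where "mx = Max (range (cost x))" and "mn = Min (range (cost x))"
  have mn_pos: "mn > 0" unfolding mn_def using assms by (subst Min_gr_iff) auto
  have ratio: "mx / mn \<le> Rcost cost" unfolding Rcost_def mx_def mn_def by (intro Max_ge) auto
  have "cost x y \<le> mx" unfolding mx_def by simp
  then have "mx / mn \<ge> 0" using mn_pos assms[of x y] by simp
  have "cost x y \<le> mx / mn * mn" using \<open>cost x y \<le> mx\<close> mn_pos by simp
  also have "\<dots> \<le> mx / mn * cost x y'"
    by (intro mult_left_mono) (use \<open>mx / mn \<ge> 0\<close> in \<open>simp_all add: mn_def\<close>)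
  also have "\<dots> \<le> Rcost cost * cost x y'"
    using ratio assms[of x y'] by (intro mult_right_mono) auto
  finally show ?thesis .
qed

text \<open>
  phi is the entry at index 1 of the sorted list of costs; when the list has fewer than two
  entries this index is out of range, hence the hypothesis of two distinct responses.
\<close>

lemma phi_second_smallest:
  fixes cost :: "'x \<Rightarrow> 'y::finite \<Rightarrow> real"
  assumes "y1 \<noteq> y2"
  shows "phi cost x \<in> range (cost x)" and "phi cost x \<le> max (cost x y1) (cost x y2)"
proof -
  define L where "L = sorted_list_of_multiset (image_mset (cost x) (mset_set (UNIV::'y set)))"
  have "{#y1, y2#} \<subseteq># mset_set (UNIV::'y set)"
    unfolding subseteq_mset_def using assms by (auto simp: count_mset_set')
  then have sub: "{#cost x y1, cost x y2#} \<subseteq># mset L"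
    unfolding L_def using image_mset_subseteq_mono by fastforce
  then have "length L \<ge> 2" using size_mset_mono[OF sub] by simp
  then obtain a b rest where L: "L = a # b # rest"
    by (metis One_nat_def Suc_1 Suc_le_length_iff)
  have phi: "phi cost x = b" unfolding phi_def L_def[symmetric] L by simp
  have "b \<in> set L" using L by simp
  then show "phi cost x \<in> range (cost x)" unfolding phi L_def by auto
  show "phi cost x \<le> max (cost x y1) (cost x y2)"
  proof (rule ccontr)
    assume "\<not> ?thesis"
    then have big: "\<forall>v\<in>set (b # rest). v > max (cost x y1) (cost x y2)"
      using phi L sorted_sorted_list_of_multiset[of "image_mset (cost x) (mset_set UNIV)"]
      unfolding L_def[symmetric] by auto
    have "cost x y1 \<in># mset L" "cost x y2 \<in># mset L" using sub by (auto dest: mset_subset_eqD)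
    then have "cost x y1 = a" "cost x y2 = a" using big L by auto
    then have "count (mset L) a \<ge> 2"
      using mset_subset_eq_count[OF sub, of a] by simp
    moreover have "a \<notin> set (b # rest)" using big \<open>cost x y1 = a\<close> by force
    then have "count (mset L) a = 1" using L by (simp add: count_eq_zero_iff)
    ultimately show False by simp
  qed
qed

lemma cost_le_rcost_mul:
  fixes cost :: "'x::finite \<Rightarrow> 'y::finite \<Rightarrow> real"
  assumes "card Y \<ge> 2" "\<And>x y. cost x y > 0"
  obtains y' where "y' \<in> Y" "cost x z \<le> rcost cost * cost x y'"
proof -
  have Y: "finite Y" "Y \<noteq> {}" using assms(1) by auto
  have "Max (cost x ` Y) \<in> cost x ` Y" using Y by (intro Max_in) auto
  then obtain y' where y': "y' \<in> Y" "cost x y' = Max (cost x ` Y)" by auto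
  then have costliest: "cost x y \<le> cost x y'" if "y \<in> Y" for y
    using that Y(1) by simp
  have "\<not> card Y \<le> Suc 0" using assms(1) by simp
  then obtain y1 y2 where "y1 \<in> Y" "y2 \<in> Y" "y1 \<noteq> y2"
    using card_le_Suc0_iff_eq[OF Y(1)] by blast
  then have "phi cost x \<le> max (cost x y1) (cost x y2)" "phi cost x \<in> range (cost x)"
    by (simp_all add: phi_second_smallest)
  moreover have "max (cost x y1) (cost x y2) \<le> cost x y'"
    using costliest \<open>y1 \<in> Y\<close> \<open>y2 \<in> Y\<close> by simp
  ultimately have "phi cost x \<le> cost x y'" "phi cost x \<in> range (cost x)" by auto
  then have phi_pos: "phi cost x > 0" using assms(2) by auto
  have ratio: "cost x z / phi cost x \<le> rcost cost"
    unfolding rcost_def by (intro Max_ge) auto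
  moreover have "0 < cost x z / phi cost x" using phi_pos assms(2) by simp
  ultimately have "rcost cost \<ge> 0" by linarith
  have "cost x z \<le> rcost cost * phi cost x"
    using ratio phi_pos by (simp add: divide_le_eq mult.commute)
  also have "\<dots> \<le> rcost cost * cost x y'"
    using \<open>phi cost x \<le> cost x y'\<close> \<open>rcost cost \<ge> 0\<close> by (rule mult_left_mono)
  finally show thesis using that y'(1) by blast
qed

definition response_cost_bound ::
    "('x \<Rightarrow> 'y) set \<Rightarrow> ('x \<Rightarrow> 'y \<Rightarrow> real) \<Rightarrow> ('x, 'y) alg \<Rightarrow> real \<Rightarrow> bool" where
  "response_cost_bound H cost A \<gamma> \<longleftrightarrow> (\<forall>h\<in>H. \<forall>t x. A (run A h t) = Some x \<longrightarrow>
      (\<forall>y. \<exists>y'\<in>resp H x (run A h t). cost x y \<le> \<gamma> * cost x y'))"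

lemma response_cost_bound_Rcost:
  assumes "\<And>x y. cost x y > 0"
  shows "response_cost_bound H cost A (Rcost cost)"
  unfolding response_cost_bound_def
proof (intro ballI allI impI)
  fix h t x y assume "h \<in> H"
  then have "h x \<in> resp H x (run A h t)" unfolding resp_def using in_vs_run by blast
  then show "\<exists>y'\<in>resp H x (run A h t). cost x y \<le> Rcost cost * cost x y'"
    using cost_le_Rcost_mul[where cost = cost, OF assms] by blast
qed

lemma response_cost_bound_rcost:
  assumes "bifurcating H A" "\<And>x y. cost x y > 0"
  shows "response_cost_bound H cost A (rcost cost)"
  unfolding response_cost_bound_def
proof (intro ballI allI impI)
  fix h t x y assume "h \<in> H" "A (run A h t) = Some x"
  then have "card (resp H x (run A h t)) \<ge> 2" using assms(1) unfolding bifurcating_def by blast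
  then obtain y' where "y' \<in> resp H x (run A h t)" "cost x y \<le> rcost cost * cost x y'"
    using cost_le_rcost_mul[where cost = cost, OF _ assms(2)] by blast
  then show "\<exists>y'\<in>resp H x (run A h t). cost x y \<le> rcost cost * cost x y'" by blast
qed

lemma response_cost_bound_ge_one:
  fixes cost :: "'x \<Rightarrow> 'y::finite \<Rightarrow> real"
  assumes "response_cost_bound H cost A \<gamma>" "h \<in> H" "A (run A h t) = Some x"
    "\<And>x y. cost x y > 0"
  shows "\<gamma> \<ge> 1"
  using assms(1-3) unfolding response_cost_bound_def
  by (intro cost_ratio_bound_ge_one[where cost = cost and x = x, OF _ assms(4)]) blast

section \<open>Submodular covering\<close>

lemma min_submodular_le_sum_singletons:
  assumes "finite T" "\<And>S. f S \<ge> 0" "submodular f" "f {} = 0" "Q \<ge> 0"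
  shows "min (f T) Q \<le> (\<Sum>z\<in>T. min (f {z}) Q)"
  using assms(1)
proof (induction T rule: finite_induct)
  case (insert z T)
  have "f (insert z T) - f T \<le> f (insert z {}) - f {}"
    using assms(3) insert(2) unfolding submodular_def by blast
  then have "min (f (insert z T)) Q \<le> min (f T) Q + min (f {z}) Q"
    using assms(2)[of T] assms(2)[of "{z}"] assms(4,5) by linarith
  then show ?case using insert by simp
qed (use assms in simp)

lemma efficient_element_of_cheap_goal_set:
  assumes "finite T" "Q \<le> f T" "costS cost T \<le> K" "Q > 0"
    "\<And>S. f S \<ge> 0" "submodular f" "f {} = 0" "\<And>x y. cost x y > 0"
  shows "\<exists>(x, y)\<in>T. Q / K \<le> min (f {(x, y)}) Q / cost x y"
proof (rule ccontr)
  assume "\<not> ?thesis"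
  then have "min (f {(x, y)}) Q / cost x y < Q / K" if "(x, y) \<in> T" for x y
    using that by fastforce
  then have small: "min (f {(x, y)}) Q < Q / K * cost x y" if "(x, y) \<in> T" for x y
    using that assms(8)[of x y] by (metis pos_divide_less_eq)
  have "T \<noteq> {}" using assms(2,4,7) by auto
  then have "0 < costS cost T"
    unfolding costS_def using assms(1,8) by (intro sum_pos) auto
  then have "K > 0" using assms(3) by simp
  have "Q \<le> (\<Sum>z\<in>T. min (f {z}) Q)"
    using min_submodular_le_sum_singletons[of T f Q] assms by force
  also have "\<dots> < (\<Sum>(x, y)\<in>T. Q / K * cost x y)"
    using small \<open>T \<noteq> {}\<close> assms(1) by (intro sum_strict_mono) auto
  also have "\<dots> = Q / K * costS cost T"
    unfolding costS_def by (simp add: sum_distrib_left case_prod_beta)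
  also have "\<dots> \<le> Q / K * K"
    using assms(3,4) \<open>K > 0\<close> by (intro mult_left_mono) auto
  finally show False using \<open>K > 0\<close> by simp
qed

section \<open>The adversarial run\<close>

lemma ufun_empty_attained:
  assumes "finite H" "H \<noteq> {}" "f {} = 0" "Q \<ge> 0"
  obtains g where "\<And>x. ufun H cost f Q x {} = min (f {(x, g x)}) Q / cost x (g x)"
proof -
  have "\<exists>h\<in>H. ufun H cost f Q x {} = min (f {(x, h x)}) Q / cost x (h x)" for x
  proof -
    define F where "F h = min (f {(x, h x)}) Q / cost x (h x)" for h
    have "ufun H cost f Q x {} = Min (F ` H)"
      unfolding ufun_def delta_def F_def using assms(3,4) by simp
    moreover have "Min (F ` H) \<in> F ` H" using assms(1,2) by (intro Min_in) auto
    ultimately show ?thesis unfolding F_def by auto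
  qed
  then obtain h where "\<And>x. ufun H cost f Q x {} = min (f {(x, h x x)}) Q / cost x (h x x)"
    by metis
  then show thesis by (intro that[of "\<lambda>x. h x x"])
qed

lemma adversary_goal_set:
  fixes H :: "('x::finite \<Rightarrow> 'y::finite) set" and g :: "'x \<Rightarrow> 'y"
  assumes H_ne: "H \<noteq> {}" and cost_pos: "\<And>x y. cost x y > 0"
    and Q_pos: "Q > 0" and f_empty: "f {} = 0"
    and cons: "consistency_aware H f Q"
    and terminates_all: "\<forall>h\<in>H. terminates A h"
    and achieves: "\<forall>h\<in>H. f (final A h) \<ge> Q"
    and bound: "response_cost_bound H cost A \<gamma>"
  obtains T where "\<forall>(a, b)\<in>T. b = g a" "Q \<le> f T" "costS cost T \<le> \<gamma> * costA cost H A"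
proof -
  obtain h0 where h0: "h0 \<in> H" using H_ne by blast
  then obtain x0 where x0: "A (run A h0 0) = Some x0"
    using final_eq[of A h0 0] achieves f_empty Q_pos by fastforce
  have "\<gamma> \<ge> 1" by (rule response_cost_bound_ge_one[where cost = cost, OF bound h0 x0 cost_pos])
  obtain t where vs_ne: "vs H (run A g t) \<noteq> {}" and active: "\<forall>s<t. A (run A g s) \<noteq> None"
    and stop: "A (run A g t) = None \<or>
      (\<exists>x. A (run A g t) = Some x \<and> vs H (insert (x, g x) (run A g t)) = {})"
    using adversary_run_stops[OF H_ne finite terminates_all] by blast
  define S where "S = run A g t"
  have S_g: "\<forall>(a, b)\<in>S. b = g a" unfolding S_def using run_consistent by fast
  obtain h where h: "h \<in> vs H S" "h \<in> H" using vs_ne unfolding S_def vs_def by blast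
  from stop show thesis
  proof (elim disjE exE conjE)
    assume "A (run A g t) = None"
    then have "final A h = S"
      unfolding S_def by (rule final_consistent_run[OF h(1)[unfolded S_def] active])
    then have "Q \<le> f S" "costS cost S \<le> costA cost H A"
      using achieves h(2) costS_final_le_costA[OF h(2), of cost A] by auto
    moreover have "costA cost H A \<le> \<gamma> * costA cost H A"
      using \<open>\<gamma> \<ge> 1\<close> calculation(2) costS_nonneg[of cost S, OF cost_pos]
      by (simp add: mult_le_cancel_right1)
    ultimately show thesis using S_g by (intro that) auto
  next
    fix x assume query: "A (run A g t) = Some x"
      and inconsistent: "vs H (insert (x, g x) (run A g t)) = {}"
    have "Q \<le> f (insert (x, g x) S)"
      using cons inconsistent unfolding consistency_aware_def S_def by blast
    have "run A h t = S" using run_agree_active(1)[OF h(1)[unfolded S_def] active] S_def by simp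
    then have "\<exists>y'\<in>resp H x S. cost x (g x) \<le> \<gamma> * cost x y'"
      using bound[unfolded response_cost_bound_def, rule_format, OF h(2), of t x "g x"] query S_def
      by simp
    then obtain y' h' where y': "cost x (g x) \<le> \<gamma> * cost x y'"
      and h': "h' \<in> vs H S" "h' \<in> H" "h' x = y'"
      unfolding resp_def vs_def by blast
    have "(x, g x) \<notin> S"
    proof
      assume "(x, g x) \<in> S"
      then have "insert (x, g x) S = S" by blast
      with inconsistent vs_ne show False unfolding S_def by simp
    qed
    then have "(x, y') \<notin> S" using S_g by auto
    have "costS cost (insert (x, g x) S) \<le> \<gamma> * costS cost (insert (x, y') S)"
      using \<open>(x, g x) \<notin> S\<close> \<open>(x, y') \<notin> S\<close> y' \<open>\<gamma> \<ge> 1\<close> cost_pos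
      by (intro costS_insert_le_scaled) simp_all
    also have "costS cost (insert (x, y') S) \<le> costA cost H A"
      using costS_consistent_query_le_costA[where cost = cost, OF h'(1)[unfolded S_def] active query
          _ cost_pos] h'(2,3) terminates_all
      unfolding S_def by simp
    then have "\<gamma> * costS cost (insert (x, y') S) \<le> \<gamma> * costA cost H A"
      using \<open>\<gamma> \<ge> 1\<close> by (intro mult_left_mono) auto
    finally have "costS cost (insert (x, g x) S) \<le> \<gamma> * costA cost H A" .
    moreover have "\<forall>(a, b)\<in>insert (x, g x) S. b = g a" using S_g by auto
    ultimately show thesis using that \<open>Q \<le> f (insert (x, g x) S)\<close> by blast
  qed
qed

theorem lemma2:
  fixes H :: "('x::finite \<Rightarrow> 'y::finite) set"
    and cost :: "'x \<Rightarrow> 'y \<Rightarrow> real"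
    and f :: "('x \<times> 'y) set \<Rightarrow> real"
    and Q \<eta> :: real
    and A :: "('x, 'y) alg"
  assumes H_ne: "H \<noteq> {}"
    and cost_pos: "\<And>x y. cost x y > 0"
    and f_nonneg: "\<And>S. f S \<ge> 0"
    and Q_pos: "Q > 0" and eta_pos: "\<eta> > 0"
    and mono: "monotone_fn f" and submod: "submodular f" and f_empty: "f {} = 0"
    and gap: "\<And>S. f S \<ge> Q - \<eta> \<Longrightarrow> f S \<ge> Q"
    and cons: "consistency_aware H f Q"
    and terminates_all: "\<forall>h\<in>H. terminates A h"
    and achieves: "\<forall>h\<in>H. f (final A h) \<ge> Q"
  shows "\<exists>x. ufun H cost f Q x {} \<ge>
           Q / ((if bifurcating H A then rcost cost else Rcost cost) * costA cost H A)"
proof -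
  define \<gamma> where "\<gamma> = (if bifurcating H A then rcost cost else Rcost cost)"
  have bound: "response_cost_bound H cost A \<gamma>"
    unfolding \<gamma>_def
    using response_cost_bound_rcost[where cost = cost, OF _ cost_pos]
      response_cost_bound_Rcost[where cost = cost, OF cost_pos] by simp
  obtain g where g: "\<And>x. ufun H cost f Q x {} = min (f {(x, g x)}) Q / cost x (g x)"
    using ufun_empty_attained[where cost = cost and f = f, OF finite H_ne f_empty]
      less_imp_le[OF Q_pos] by blast
  obtain T where T: "\<forall>(a, b)\<in>T. b = g a" "Q \<le> f T" "costS cost T \<le> \<gamma> * costA cost H A"
    using adversary_goal_set[where cost = cost, OF H_ne cost_pos Q_pos f_empty cons terminates_all
        achieves bound] by blast
  then obtain a b where "(a, b) \<in> T" "Q / (\<gamma> * costA cost H A) \<le> min (f {(a, b)}) Q / cost a b"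
    using efficient_element_of_cheap_goal_set[where cost = cost, OF finite T(2,3) Q_pos f_nonneg
        submod f_empty cost_pos] by blast
  with T(1) g have "Q / (\<gamma> * costA cost H A) \<le> ufun H cost f Q a {}" by auto
  then show ?thesis unfolding \<gamma>_def by blast
qed

end
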